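(* Let $n\ge 1$. For every $G\in\mathcal{G}_{2n}$ with $F(G)=n-1$ we have $\lfloor n/2\rfloor\le f(G)\le n-1$, and for every integer $m$ with $\lfloor n/2\rfloor\leq m\leq n-1$ there exists $G\in\mathcal{G}_{2n}$ with $F(G)=n-1$ and $f(G)=m$. That is, $\{f(G): G\in\mathcal{G}_{2n},\ F(G)=n-1\}=\{\lfloor n/2\rfloor,\dots,n-1\}$.
   Context: All graphs are finite and simple. $\mathcal{G}_{2n}$ denotes the set of all graphs with $2n$ vertices that have a perfect matching. For a perfect matching $M$ of $G$, a forcing set of $M$ is a subset $S\subseteq M$ contained in no other perfect matching of $G$; $f(G,M)$ is the minimum size of a forcing set of $M$. $f(G)$ and $F(G)$ are the minimum and maximum of $f(G,M)$ over all perfect matchings $M$ of $G$. *)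

theory Defs
  imports Main
begin

definition simple_graph :: "'a set \<Rightarrow> 'a set set \<Rightarrow> bool" where
  "simple_graph V E \<longleftrightarrow> finite V \<and>
     (\<forall>e\<in>E. \<exists>u v. e = {u, v} \<and> u \<noteq> v \<and> u \<in> V \<and> v \<in> V)"

definition perfect_matching :: "'a set \<Rightarrow> 'a set set \<Rightarrow> 'a set set \<Rightarrow> bool" where
  "perfect_matching V E M \<longleftrightarrow> M \<subseteq> E \<and> (\<forall>v\<in>V. \<exists>!e. e \<in> M \<and> v \<in> e)"

definition forcing_set :: "'a set \<Rightarrow> 'a set set \<Rightarrow> 'a set set \<Rightarrow> 'a set set \<Rightarrow> bool" where
  "forcing_set V E M S \<longleftrightarrow> S \<subseteq> M \<and>
     (\<forall>M'. perfect_matching V E M' \<and> S \<subseteq> M' \<longrightarrow> M' = M)"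

definition forcing_number :: "'a set \<Rightarrow> 'a set set \<Rightarrow> 'a set set \<Rightarrow> nat" where
  "forcing_number V E M = Min {card S | S. forcing_set V E M S}"

definition min_forcing_number :: "'a set \<Rightarrow> 'a set set \<Rightarrow> nat" where
  "min_forcing_number V E = Min {forcing_number V E M | M. perfect_matching V E M}"

definition max_forcing_number :: "'a set \<Rightarrow> 'a set set \<Rightarrow> nat" where
  "max_forcing_number V E = Max {forcing_number V E M | M. perfect_matching V E M}"

definition in_G2n :: "nat \<Rightarrow> 'a set \<Rightarrow> 'a set set \<Rightarrow> bool" where
  "in_G2n n V E \<longleftrightarrow> simple_graph V E \<and> card V = 2 * n \<and> (\<exists>M. perfect_matching V E M)"

end

(* If a perfect matching M0 of G has forcing number n - 1, then every two edges of M0 lie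
   on an M0-alternating 4-cycle: otherwise deleting both from M0 leaves a forcing set of
   size n - 2.  Now let S force some perfect matching M.  If two edges {A, B}, {C, D} of M0
   avoided all vertices of S, they would span such a square, and every other vertex would be
   adjacent to an end of each of them; a case analysis on the M-partners of A, B, C, D then yields an
   M-alternating cycle of length 4, 6 or 8 disjoint from S, so S would not force M.  Hence
   all but one edge of M0 meet the 2 |S| vertices of S, and n <= 2 |S| + 1.

   For the converse, block_graph n k on the vertices 0, ..., 2n - 1 keeps the matching of
   the pairs {2i, 2i + 1} pairwise alternating, so F = n - 1.  Its first 4k vertices form
   k blocks of four, and the perfect matching using the same-parity edges inside the blocks
   is forced by its n - 1 - k edges away from the even block vertices and the last pair,
   while every forcing set of every perfect matching leaves at most 2k + 3 vertices
   uncovered. *)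

theory Submission
  imports Defs
begin

section \<open>Perfect matchings and the partner map\<close>

locale graph_matching =
  fixes V :: "'a set" and E :: "'a set set" and M :: "'a set set"
  assumes simple: "simple_graph V E" and perfect: "perfect_matching V E M"
begin

lemma finite_V: "finite V"
  using simple by (simp add: simple_graph_def)

lemma edgeE:
  assumes "e \<in> E"
  obtains u v where "e = {u, v}" "u \<noteq> v" "u \<in> V" "v \<in> V"
  using simple assms by (auto simp: simple_graph_def)

lemma edge_subset_V: "e \<in> E \<Longrightarrow> e \<subseteq> V"
  by (auto elim: edgeE)

lemma finite_E: "finite E"
  using finite_V edge_subset_V by (meson Pow_iff finite_Pow_iff finite_subset subsetI)

lemma M_subset_E: "M \<subseteq> E"
  using perfect by (simp add: perfect_matching_def)

lemma finite_M: "finite M"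
  using finite_E M_subset_E finite_subset by blast

lemma matching_edge_unique:
  assumes "e1 \<in> M" "e2 \<in> M" "v \<in> e1" "v \<in> e2"
  shows "e1 = e2"
proof -
  have "v \<in> V"
    using assms(1,3) M_subset_E edge_subset_V by blast
  then have "\<exists>!e. e \<in> M \<and> v \<in> e"
    using perfect by (simp add: perfect_matching_def)
  then show ?thesis
    using assms by blast
qed

lemma matching_edgeD: "{u, v} \<in> M \<Longrightarrow> u \<noteq> v \<and> u \<in> V \<and> v \<in> V"
  using M_subset_E by (auto elim!: edgeE simp: doubleton_eq_iff)

lemma matching_edges_disjoint:
  "{a, b} \<in> M \<Longrightarrow> {c, d} \<in> M \<Longrightarrow> {a, b} \<noteq> {c, d} \<Longrightarrow> {a, b} \<inter> {c, d} = {}"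
  using matching_edge_unique by blast

lemma card_matching_edge: "e \<in> M \<Longrightarrow> card e = 2"
  using M_subset_E by (fastforce elim: edgeE)

lemma card_Union_matching: "S \<subseteq> M \<Longrightarrow> card (\<Union>S) = 2 * card S"
proof -
  assume S: "S \<subseteq> M"
  have "pairwise disjnt S"
    unfolding pairwise_def disjnt_def using S matching_edge_unique by blast
  moreover have "finite e" if "e \<in> S" for e
    using that S card_matching_edge card.infinite by fastforce
  ultimately have "card (\<Union>S) = sum card S"
    by (rule card_Union_disjoint)
  also have "\<dots> = 2 * card S"
    using S card_matching_edge by (simp add: subset_eq)
  finally show ?thesis .
qed

lemma Union_M: "\<Union>M = V"
  using perfect M_subset_E edge_subset_V unfolding perfect_matching_def by blast

lemma card_V: "card V = 2 * card M"
  using card_Union_matching[of M] Union_M by simp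

definition mate :: "'a \<Rightarrow> 'a" where
  "mate v = (THE u. {v, u} \<in> M)"

lemma mate_unique:
  assumes "{v, u} \<in> M" "{v, u'} \<in> M"
  shows "u = u'"
proof -
  have "{v, u} = {v, u'}"
    using assms by (intro matching_edge_unique) auto
  then have "u \<in> {v, u'}"
    by blast
  then show ?thesis
    using assms(1) matching_edgeD by blast
qed

lemma mate_edge: "v \<in> V \<Longrightarrow> {v, mate v} \<in> M"
proof -
  assume "v \<in> V"
  then obtain e where "e \<in> M" "v \<in> e"
    using Union_M by blast
  moreover obtain a b where "e = {a, b}"
    using \<open>e \<in> M\<close> M_subset_E by (blast elim: edgeE)
  ultimately obtain u where u: "{v, u} \<in> M"
    by (metis insert_commute insertE singletonD)
  show ?thesis
    unfolding mate_def by (rule theI[of _ u]) (rule u, rule mate_unique[OF _ u])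
qed

lemma mate_eqI:
  assumes "{v, u} \<in> M"
  shows "mate v = u"
proof -
  have "v \<in> V"
    using assms matching_edgeD by blast
  show ?thesis
    using mate_unique[OF mate_edge[OF \<open>v \<in> V\<close>] assms] .
qed

lemma mate_edge': "v \<in> V \<Longrightarrow> {mate v, v} \<in> M"
  using mate_edge by (simp add: insert_commute)

lemma mate_neq: "v \<in> V \<Longrightarrow> mate v \<noteq> v"
  using mate_edge matching_edgeD by metis

lemma mate_in_V: "v \<in> V \<Longrightarrow> mate v \<in> V"
  using mate_edge matching_edgeD by metis

lemma mate_mate: "v \<in> V \<Longrightarrow> mate (mate v) = v"
  using mate_eqI[OF mate_edge'] .

lemma mate_swap: "v \<in> V \<Longrightarrow> mate v = u \<Longrightarrow> mate u = v"
  using mate_mate by blast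

lemma mate_ne_if_mate:
  assumes "v \<in> V" "w \<in> V" "mate v = u" "w \<noteq> u"
  shows "mate w \<noteq> v"
proof
  assume "mate w = v"
  then have "mate v = w"
    by (rule mate_swap[OF assms(2)])
  then show False
    using assms(3,4) by simp
qed

lemma mate_inj:
  assumes "u \<in> V" "v \<in> V" "mate u = mate v"
  shows "u = v"
  using mate_mate[OF assms(1)] mate_mate[OF assms(2)] assms(3) by metis

lemma mate_not_covered:
  assumes "S \<subseteq> M" "v \<in> V" "v \<notin> \<Union>S"
  shows "mate v \<notin> \<Union>S"
proof
  assume "mate v \<in> \<Union>S"
  then obtain e where "e \<in> S" "mate v \<in> e"
    by blast
  then have "e = {v, mate v}"
    using assms(1,2) mate_edge matching_edge_unique by blast
  then show False
    using assms(3) \<open>e \<in> S\<close> by blast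
qed

lemma mate_in_uncovered:
  assumes "S \<subseteq> M" and "V - X \<subseteq> \<Union>S" and "v \<in> V" and "v \<notin> \<Union>S"
  shows "mate v \<in> X"
  using assms mate_not_covered mate_in_V by blast

lemma perfect_matching_superset_eq:
  assumes "perfect_matching V E M'" "M \<subseteq> M'"
  shows "M' = M"
proof -
  interpret M': graph_matching V E M'
    using simple assms(1) by unfold_locales
  have "e \<in> M" if e: "e \<in> M'" for e
  proof -
    obtain u v where "e = {u, v}" "u \<in> V"
      using e M'.M_subset_E by (blast elim: M'.edgeE)
    then show ?thesis
      using e mate_edge[of u] assms(2) M'.matching_edge_unique[of e "{u, mate u}" u] by auto
  qed
  then show ?thesis
    using assms(2) by blast
qed

lemma perfect_matching_exchange:
  assumes D: "D \<subseteq> M" and N: "N \<subseteq> E" and same_vertices: "\<Union>D = \<Union>N"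
    and N_matching: "\<And>v e1 e2. e1 \<in> N \<Longrightarrow> e2 \<in> N \<Longrightarrow> v \<in> e1 \<Longrightarrow> v \<in> e2 \<Longrightarrow> e1 = e2"
  shows "perfect_matching V E ((M - D) \<union> N)"
  unfolding perfect_matching_def
proof (intro conjI ballI)
  show "M - D \<union> N \<subseteq> E"
    using M_subset_E N by blast
  fix v assume "v \<in> V"
  have "\<exists>e \<in> M - D \<union> N. v \<in> e"
    using \<open>v \<in> V\<close> Union_M same_vertices by blast
  moreover have "e1 = e2" if "e1 \<in> M - D \<union> N" "e2 \<in> M - D \<union> N" "v \<in> e1" "v \<in> e2" for e1 e2
  proof -
    have not_both: False if e: "e \<in> M - D" "v \<in> e" and e': "e' \<in> N" "v \<in> e'" for e e'
    proof -
      obtain d where "d \<in> D" "v \<in> d"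
        using e' same_vertices by blast
      then have "e = d"
        using e D matching_edge_unique by blast
      then show False
        using e \<open>d \<in> D\<close> by blast
    qed
    show ?thesis
      using that not_both N_matching[of e1 e2 v] matching_edge_unique[of e1 e2 v] by blast
  qed
  ultimately show "\<exists>!e. e \<in> M - D \<union> N \<and> v \<in> e"
    by blast
qed

section \<open>Alternating cycles\<close>

definition unforced :: "'a set set \<Rightarrow> bool" where
  "unforced S \<longleftrightarrow> (\<exists>M'. perfect_matching V E M' \<and> S \<subseteq> M' \<and> M' \<noteq> M)"

lemma forcing_set_not_unforced: "forcing_set V E M S \<Longrightarrow> \<not> unforced S"
  unfolding forcing_set_def unforced_def by blast

lemma perfect_matching_along_cycle:
  fixes x y :: "nat \<Rightarrow> 'a"
  assumes "0 < k"
    and in_M: "\<And>i. i < k \<Longrightarrow> {x i, y i} \<in> M"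
    and closing: "\<And>i. i < k \<Longrightarrow> {y i, x (Suc i mod k)} \<in> E"
    and distinct: "inj_on x {..<k}" "inj_on y {..<k}" "\<And>i j. i < k \<Longrightarrow> j < k \<Longrightarrow> x i \<noteq> y j"
  shows "perfect_matching V E ((M - {{x i, y i} | i. i < k}) \<union> {{y i, x (Suc i mod k)} | i. i < k})"
proof (rule perfect_matching_exchange)
  have rotate_inj: "inj_on (\<lambda>i. Suc i mod k) {..<k}"
    by (auto simp: inj_on_def mod_Suc split: if_splits)
  then have rotate: "(\<lambda>i. Suc i mod k) ` {..<k} = {..<k}"
    using \<open>0 < k\<close> by (intro endo_inj_surj) auto
  have "\<Union>{{x i, y i} | i. i < k} = x ` {..<k} \<union> y ` {..<k}"
    by blast
  moreover have "\<Union>{{y i, x (Suc i mod k)} | i. i < k} = y ` {..<k} \<union> x ` ((\<lambda>i. Suc i mod k) ` {..<k})"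
    by blast
  ultimately show "\<Union>{{x i, y i} | i. i < k} = \<Union>{{y i, x (Suc i mod k)} | i. i < k}"
    unfolding rotate by (simp add: Un_commute)
  fix v e1 e2
  assume "e1 \<in> {{y i, x (Suc i mod k)} | i. i < k}" "e2 \<in> {{y i, x (Suc i mod k)} | i. i < k}"
    and v: "v \<in> e1" "v \<in> e2"
  then obtain i j where ij: "i < k" "j < k" "e1 = {y i, x (Suc i mod k)}" "e2 = {y j, x (Suc j mod k)}"
    by blast
  have succ: "Suc i mod k < k" "Suc j mod k < k"
    using \<open>0 < k\<close> by simp_all
  then have "y i = y j \<or> x (Suc i mod k) = x (Suc j mod k)"
    using v ij distinct(3)[OF succ(2) ij(1)] distinct(3)[OF succ(1) ij(2)] by auto
  then have "i = j"
    using inj_onD[OF distinct(2), of i j] inj_onD[OF distinct(1), of "Suc i mod k" "Suc j mod k"]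
      inj_onD[OF rotate_inj, of i j] ij succ by auto
  then show "e1 = e2"
    using ij by simp
qed (use in_M closing in blast)+

lemma unforced_alternating_cycle:
  fixes x :: "nat \<Rightarrow> 'a"
  assumes "2 \<le> k" and "S \<subseteq> M"
    and uncovered: "\<And>i. i < k \<Longrightarrow> x i \<in> V - \<Union>S"
    and distinct: "\<And>i j. i < j \<Longrightarrow> j < k \<Longrightarrow> x i \<notin> {x j, mate (x j)}"
    and closing: "\<And>i. i < k \<Longrightarrow> {mate (x i), x (Suc i mod k)} \<in> E"
  shows "unforced S"
proof -
  let ?y = "\<lambda>i. mate (x i)"
  have in_M: "{x i, ?y i} \<in> M" if "i < k" for i
    using uncovered[OF that] mate_edge by blast
  have apart_less: "{x i, ?y i} \<inter> {x j, ?y j} = {}" if "i < j" "j < k" for i j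
    using distinct[OF that] in_M that by (intro matching_edges_disjoint) auto
  have apart: "{x i, ?y i} \<inter> {x j, ?y j} = {}" if "i < k" "j < k" "i \<noteq> j" for i j
    using apart_less[of i j] apart_less[of j i] that by (cases "i < j") auto
  have "inj_on x {..<k}" "inj_on ?y {..<k}"
    using apart by (auto simp: inj_on_def)
  moreover have "x i \<noteq> ?y j" if "i < k" "j < k" for i j
  proof -
    have "?y i \<noteq> x i"
      using mate_neq uncovered[OF that(1)] by blast
    then show ?thesis
      using apart[OF that] by (cases "i = j") auto
  qed
  ultimately have exchanged: "perfect_matching V E
      ((M - {{x i, ?y i} | i. i < k}) \<union> {{?y i, x (Suc i mod k)} | i. i < k})" (is "perfect_matching V E ?M'")
    using \<open>2 \<le> k\<close> in_M closing by (intro perfect_matching_along_cycle) auto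
  have "{?y 0, x 1} \<in> ?M'"
    using \<open>2 \<le> k\<close> by force
  moreover have "{?y 0, x 1} \<notin> M"
    using in_M[of 0] apart_less[of 0 1] matching_edge_unique \<open>2 \<le> k\<close> by auto
  moreover have "S \<subseteq> ?M'"
    using \<open>S \<subseteq> M\<close> uncovered by blast
  ultimately show ?thesis
    unfolding unforced_def using exchanged by blast
qed

lemma unforced_alternating_square:
  assumes "S \<subseteq> M" "u \<in> V - \<Union>S" "v \<in> V - \<Union>S" "u \<noteq> v" "mate u \<noteq> v"
    "{mate u, v} \<in> E" "{mate v, u} \<in> E"
  shows "unforced S"
proof -
  have "u \<notin> {v, mate v}"
    using assms(3-5) mate_swap[of v u] by auto
  then show ?thesis
    by (intro unforced_alternating_cycle[of 2 S "(!) [u, v]"])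
      (use assms in \<open>auto simp: less_Suc_eq numeral_eq_Suc\<close>)
qed

lemma unforced_alternating_hexagon:
  assumes "S \<subseteq> M" "x1 \<in> V - \<Union>S" "x2 \<in> V - \<Union>S" "x3 \<in> V - \<Union>S"
    "x1 \<notin> {x2, mate x2}" "x1 \<notin> {x3, mate x3}" "x2 \<notin> {x3, mate x3}"
    "{mate x1, x2} \<in> E" "{mate x2, x3} \<in> E" "{mate x3, x1} \<in> E"
  shows "unforced S"
proof (rule unforced_alternating_cycle[of 3 S "(!) [x1, x2, x3]"])
  fix i :: nat
  assume "i < 3"
  then have "i \<in> {0, 1, 2}"
    by auto
  then show "[x1, x2, x3] ! i \<in> V - \<Union>S"
    "{mate ([x1, x2, x3] ! i), [x1, x2, x3] ! (Suc i mod 3)} \<in> E"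
    using assms by auto
next
  fix i j :: nat
  assume "i < j" "j < 3"
  then have "(i, j) \<in> {(0, 1), (0, 2), (1, 2)}"
    by auto
  then show "[x1, x2, x3] ! i \<notin> {[x1, x2, x3] ! j, mate ([x1, x2, x3] ! j)}"
    using assms by auto
qed (use assms in simp_all)

lemma unforced_alternating_octagon:
  assumes "S \<subseteq> M" "x1 \<in> V - \<Union>S" "x2 \<in> V - \<Union>S" "x3 \<in> V - \<Union>S" "x4 \<in> V - \<Union>S"
    "x1 \<notin> {x2, mate x2}" "x1 \<notin> {x3, mate x3}" "x1 \<notin> {x4, mate x4}"
    "x2 \<notin> {x3, mate x3}" "x2 \<notin> {x4, mate x4}" "x3 \<notin> {x4, mate x4}"
    "{mate x1, x2} \<in> E" "{mate x2, x3} \<in> E" "{mate x3, x4} \<in> E" "{mate x4, x1} \<in> E"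
  shows "unforced S"
proof (rule unforced_alternating_cycle[of 4 S "(!) [x1, x2, x3, x4]"])
  fix i :: nat
  assume "i < 4"
  then have "i \<in> {0, 1, 2, 3}"
    by auto
  then show "[x1, x2, x3, x4] ! i \<in> V - \<Union>S"
    "{mate ([x1, x2, x3, x4] ! i), [x1, x2, x3, x4] ! (Suc i mod 4)} \<in> E"
    using assms by auto
next
  fix i j :: nat
  assume "i < j" "j < 4"
  then have "(i, j) \<in> {(0, 1), (0, 2), (0, 3), (1, 2), (1, 3), (2, 3)}"
    by auto
  then show "[x1, x2, x3, x4] ! i \<notin> {[x1, x2, x3, x4] ! j, mate ([x1, x2, x3, x4] ! j)}"
    using assms by auto
qed (use assms in simp_all)

end

section \<open>Dominated squares\<close>

text \<open>Two edges \<open>{A, B}\<close>, \<open>{C, D}\<close> of a pairwise alternating perfect matching, both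
  missed by the vertices of \<open>S\<close>.\<close>

locale dominated_square = graph_matching +
  fixes S :: "'a set set" and A B C D :: 'a
  assumes S_subset: "S \<subseteq> M"
    and corners: "A \<in> V - \<Union>S" "B \<in> V - \<Union>S" "C \<in> V - \<Union>S" "D \<in> V - \<Union>S"
    and distinct_corners: "distinct [A, B, C, D]"
    and sides: "{A, B} \<in> E" "{C, D} \<in> E" "{A, C} \<in> E" "{B, D} \<in> E"
    and dominated: "\<And>w. w \<in> V - \<Union>S \<Longrightarrow> w \<notin> {A, B, C, D} \<Longrightarrow>
      ({w, A} \<in> E \<or> {w, B} \<in> E) \<and> ({w, C} \<in> E \<or> {w, D} \<in> E)"
begin

lemma swap_sides: "dominated_square V E M S B A D C"
  using S_subset corners distinct_corners sides dominated
  by unfold_locales (auto simp: insert_commute)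

lemma swap_pairs: "dominated_square V E M S C D A B"
  using S_subset corners distinct_corners sides dominated
  by unfold_locales (auto simp: insert_commute)

lemma corners_ne: "A \<noteq> B" "A \<noteq> C" "A \<noteq> D" "B \<noteq> C" "B \<noteq> D" "C \<noteq> D"
  using distinct_corners by auto

lemma mate_uncovered: "v \<in> V - \<Union>S \<Longrightarrow> mate v \<in> V - \<Union>S"
  using mate_not_covered[OF S_subset] mate_in_V by blast

lemma corner_mates_uncovered: "mate A \<in> V - \<Union>S" "mate B \<in> V - \<Union>S" "mate C \<in> V - \<Union>S" "mate D \<in> V - \<Union>S"
  using mate_uncovered corners by blast+

lemma corner_mate_outside:
  assumes "X \<in> {A, B, C, D}" "mate X \<noteq> A" "mate X \<noteq> B" "mate X \<noteq> C" "mate X \<noteq> D"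
  shows "({mate X, A} \<in> E \<or> {mate X, B} \<in> E) \<and> ({mate X, C} \<in> E \<or> {mate X, D} \<in> E)"
  using assms corner_mates_uncovered by (intro dominated) auto

lemma unforced_if_mate_A_B:
  assumes "mate A = B"
  shows "unforced S"
proof -
  have "mate B = A"
    using assms corners mate_swap by blast
  show ?thesis
  proof (cases "{mate D, A} \<in> E")
    case True
    show ?thesis
      by (rule unforced_alternating_square[OF S_subset corners(1,4)])
        (use True assms corners_ne sides in simp_all)
  next
    case DA: False
    show ?thesis
    proof (cases "{mate C, B} \<in> E")
      case True
      show ?thesis
        by (rule unforced_alternating_square[OF S_subset corners(2,3)])
          (use True \<open>mate B = A\<close> corners_ne sides in simp_all)
    next
      case CB: False
      have "mate D \<noteq> C"
        using DA sides(3) by (auto simp: insert_commute)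
      have "mate C \<noteq> D"
        using mate_swap[of C D] \<open>mate D \<noteq> C\<close> corners(3) by blast
      have "mate C \<noteq> A" "mate C \<noteq> B" "mate D \<noteq> A" "mate D \<noteq> B"
        using mate_ne_if_mate[of A C B] mate_ne_if_mate[of B C A] mate_ne_if_mate[of A D B]
          mate_ne_if_mate[of B D A] assms \<open>mate B = A\<close> corners corners_ne by auto
      then have "{mate D, B} \<in> E" "{mate C, A} \<in> E"
        using corner_mate_outside[of D] corner_mate_outside[of C] \<open>mate D \<noteq> C\<close> \<open>mate C \<noteq> D\<close>
          DA CB mate_neq corners by auto
      moreover have "mate D \<noteq> mate C"
        using mate_inj corners corners_ne by blast
      ultimately show ?thesis
        using unforced_alternating_hexagon[OF S_subset corners(1) corner_mates_uncovered(4) corners(3)]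
          assms sides corners corners_ne mate_mate \<open>mate D \<noteq> A\<close> \<open>mate C \<noteq> A\<close> \<open>mate D \<noteq> C\<close>
        by (auto simp: insert_commute)
    qed
  qed
qed

lemma unforced_if_mate_A_C:
  assumes "mate A = C"
  shows "unforced S"
proof -
  have "mate C = A"
    using assms corners mate_swap by blast
  show ?thesis
  proof (cases "{mate D, A} \<in> E")
    case True
    show ?thesis
      by (rule unforced_alternating_square[OF S_subset corners(1,4)])
        (use True assms corners_ne sides in simp_all)
  next
    case DA: False
    show ?thesis
    proof (cases "{mate B, C} \<in> E")
      case True
      show ?thesis
        by (rule unforced_alternating_square[OF S_subset corners(3,2)])
          (use True \<open>mate C = A\<close> corners_ne sides in \<open>simp_all add: insert_commute\<close>)
    next
      case BC: False
      have "mate D \<noteq> B"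
        using DA sides(1) by (auto simp: insert_commute)
      have "mate B \<noteq> D"
        using mate_swap[of B D] \<open>mate D \<noteq> B\<close> corners(2) by blast
      have "mate B \<noteq> A" "mate B \<noteq> C" "mate D \<noteq> A" "mate D \<noteq> C"
        using mate_ne_if_mate[of A B C] mate_ne_if_mate[of C B A] mate_ne_if_mate[of A D C]
          mate_ne_if_mate[of C D A] assms \<open>mate C = A\<close> corners corners_ne by auto
      then have "{mate B, D} \<in> E" "{mate D, B} \<in> E"
        using corner_mate_outside[of B] corner_mate_outside[of D] \<open>mate B \<noteq> D\<close> \<open>mate D \<noteq> B\<close>
          BC DA mate_neq corners by (auto simp: insert_commute)
      then show ?thesis
        using unforced_alternating_square[OF S_subset corners(2,4)] corners_ne \<open>mate B \<noteq> D\<close> by blast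
    qed
  qed
qed

lemma unforced_if_mate_A_D:
  assumes "mate A = D"
  shows "unforced S"
proof -
  have "mate D = A"
    using assms corners mate_swap by blast
  show ?thesis
  proof (cases "{mate B, D} \<in> E")
    case True
    have "mate B \<noteq> D"
      using mate_ne_if_mate[of D B A] \<open>mate D = A\<close> corners corners_ne by blast
    then show ?thesis
      by (intro unforced_alternating_square[OF S_subset corners(2,4)])
        (use True \<open>mate D = A\<close> corners_ne sides in \<open>simp_all add: insert_commute\<close>)
  next
    case BD: False
    show ?thesis
    proof (cases "{mate C, A} \<in> E")
      case True
      show ?thesis
        by (rule unforced_alternating_square[OF S_subset corners(1,3)])
          (use True assms corners_ne sides in \<open>simp_all add: insert_commute\<close>)
    next
      case CA: False
      have "mate B \<noteq> C"
        using BD sides(2) by (auto simp: insert_commute)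
      have "mate C \<noteq> B"
        using mate_swap[of C B] \<open>mate B \<noteq> C\<close> corners(3) by blast
      have "mate B \<noteq> A" "mate B \<noteq> D" "mate C \<noteq> A" "mate C \<noteq> D"
        using mate_ne_if_mate[of A B D] mate_ne_if_mate[of D B A] mate_ne_if_mate[of A C D]
          mate_ne_if_mate[of D C A] assms \<open>mate D = A\<close> corners corners_ne by auto
      then have "{mate B, C} \<in> E" "{mate C, B} \<in> E"
        using corner_mate_outside[of B] corner_mate_outside[of C] \<open>mate B \<noteq> C\<close> \<open>mate C \<noteq> B\<close>
          BD CA mate_neq corners by (auto simp: insert_commute)
      then show ?thesis
        using unforced_alternating_square[OF S_subset corners(2,3)] corners_ne \<open>mate B \<noteq> C\<close> by blast
    qed
  qed
qed

lemma unforced_if_mates_outside: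
  assumes "mate A \<notin> {B, C, D}" "mate B \<notin> {A, C, D}" "mate C \<notin> {A, B, D}" "mate D \<notin> {A, B, C}"
  shows "unforced S"
proof -
  have mate_outside: "mate X \<notin> {A, B, C, D}" if "X \<in> {A, B, C, D}" for X
    using that assms mate_neq corners by auto
  have "({mate A, C} \<in> E \<or> {mate A, D} \<in> E) \<and> ({mate B, C} \<in> E \<or> {mate B, D} \<in> E) \<and>
      ({mate C, A} \<in> E \<or> {mate C, B} \<in> E) \<and> ({mate D, A} \<in> E \<or> {mate D, B} \<in> E)"
    using corner_mate_outside mate_outside by simp
  moreover have square: "unforced S"
    if "X \<in> {A, B, C, D}" "Y \<in> {A, B, C, D}" "X \<noteq> Y" "{mate X, Y} \<in> E" "{mate Y, X} \<in> E" for X Y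
    using unforced_alternating_square[OF S_subset _ _ \<open>X \<noteq> Y\<close>] that mate_outside corners by blast
  moreover have "unforced S" if "{mate A, C} \<in> E" "{mate C, B} \<in> E" "{mate B, D} \<in> E" "{mate D, A} \<in> E"
    by (rule unforced_alternating_octagon[OF S_subset corners(1,3,2,4)])
      (use that mate_outside[of A] mate_outside[of B] mate_outside[of C] mate_outside[of D] corners_ne
        in \<open>auto simp: insert_commute\<close>)
  moreover have "unforced S" if "{mate A, D} \<in> E" "{mate D, B} \<in> E" "{mate B, C} \<in> E" "{mate C, A} \<in> E"
    by (rule unforced_alternating_octagon[OF S_subset corners(1,4,2,3)])
      (use that mate_outside[of A] mate_outside[of B] mate_outside[of C] mate_outside[of D] corners_ne
        in \<open>auto simp: insert_commute\<close>)
  ultimately show ?thesis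
    using square[of A C] square[of A D] square[of B C] square[of B D] corners_ne by blast
qed

theorem dominated_square_unforced: "unforced S"
proof (cases "mate A \<in> {B, C, D} \<or> mate B \<in> {A, C, D} \<or> mate C = D")
  case True
  then show ?thesis
    using unforced_if_mate_A_B unforced_if_mate_A_C unforced_if_mate_A_D
      dominated_square.unforced_if_mate_A_B[OF swap_sides]
      dominated_square.unforced_if_mate_A_C[OF swap_sides]
      dominated_square.unforced_if_mate_A_D[OF swap_sides]
      dominated_square.unforced_if_mate_A_B[OF swap_pairs]
      mate_swap[of B A] corners(2)
    by blast
next
  case False
  then have "mate C \<notin> {A, B, D}" "mate D \<notin> {A, B, C}"
    using mate_swap[of C A] mate_swap[of C B] mate_swap[of D A] mate_swap[of D B] mate_swap[of D C]
      corners(3,4) by auto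
  then show ?thesis
    using False unforced_if_mates_outside by blast
qed

end

context graph_matching
begin

lemma forcing_set_M: "forcing_set V E M M"
  unfolding forcing_set_def using perfect_matching_superset_eq by blast

lemma finite_forcing_set_cards: "finite {card S | S. forcing_set V E M S}"
proof (rule finite_subset)
  show "{card S | S. forcing_set V E M S} \<subseteq> {..card M}"
    using finite_M unfolding forcing_set_def by (auto intro: card_mono)
qed simp

lemma forcing_number_le: "forcing_set V E M S \<Longrightarrow> forcing_number V E M \<le> card S"
  unfolding forcing_number_def using finite_forcing_set_cards by (auto intro: Min_le)

lemma forcing_number_attained:
  obtains S where "forcing_set V E M S" "forcing_number V E M = card S"
proof -
  have "forcing_number V E M \<in> {card S | S. forcing_set V E M S}"
    unfolding forcing_number_def using finite_forcing_set_cards forcing_set_M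
    by (intro Min_in) auto
  then show ?thesis
    using that by blast
qed

lemma forcing_set_remove_one:
  assumes "e \<in> M"
  shows "forcing_set V E M (M - {e})"
  unfolding forcing_set_def
proof (intro conjI allI impI)
  fix M' assume M': "perfect_matching V E M' \<and> M - {e} \<subseteq> M'"
  interpret M': graph_matching V E M'
    using simple M' by unfold_locales auto
  obtain u v where e: "e = {u, v}" "u \<noteq> v" "u \<in> V"
    using assms M_subset_E by (blast elim: edgeE)
  have "\<Union>(M - {e}) = V - e"
    using Union_M assms matching_edge_unique by blast
  then have "M'.mate u \<in> {u, v}"
    using M' e by (intro M'.mate_in_uncovered[of "M - {e}"]) auto
  then have "e \<in> M'"
    using M'.mate_edge M'.mate_neq e by auto
  then show "M' = M"
    using M' by (intro perfect_matching_superset_eq) auto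
qed simp

lemma forcing_number_le_card_minus_one: "M \<noteq> {} \<Longrightarrow> forcing_number V E M \<le> card M - 1"
  using forcing_number_le[OF forcing_set_remove_one] finite_M by fastforce

end

lemma finite_perfect_matchings: "simple_graph V E \<Longrightarrow> finite {M. perfect_matching V E M}"
proof -
  assume "simple_graph V E"
  then have "finite E"
    by (auto simp: simple_graph_def intro: finite_subset[of E "Pow V"])
  moreover have "{M. perfect_matching V E M} \<subseteq> Pow E"
    by (auto simp: perfect_matching_def)
  ultimately show ?thesis
    using finite_subset by blast
qed

lemma finite_forcing_numbers:
  "simple_graph V E \<Longrightarrow> finite {forcing_number V E M | M. perfect_matching V E M}"
  using finite_imageI[OF finite_perfect_matchings, of V E "forcing_number V E"]
  by (simp add: setcompr_eq_image)

lemma min_forcing_number_le: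
  "simple_graph V E \<Longrightarrow> perfect_matching V E M \<Longrightarrow> min_forcing_number V E \<le> forcing_number V E M"
  unfolding min_forcing_number_def using finite_forcing_numbers by (auto intro: Min_le)

lemma forcing_number_le_max:
  "simple_graph V E \<Longrightarrow> perfect_matching V E M \<Longrightarrow> forcing_number V E M \<le> max_forcing_number V E"
  unfolding max_forcing_number_def using finite_forcing_numbers by (auto intro: Max_ge)

lemma min_forcing_number_attained:
  assumes "simple_graph V E" "perfect_matching V E M"
  obtains M' where "perfect_matching V E M'" "min_forcing_number V E = forcing_number V E M'"
proof -
  have "min_forcing_number V E \<in> {forcing_number V E M | M. perfect_matching V E M}"
    unfolding min_forcing_number_def using assms finite_forcing_numbers by (intro Min_in) auto
  then show ?thesis
    using that by blast
qed

lemma max_forcing_number_attained: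
  assumes "simple_graph V E" "perfect_matching V E M"
  obtains M' where "perfect_matching V E M'" "max_forcing_number V E = forcing_number V E M'"
proof -
  have "max_forcing_number V E \<in> {forcing_number V E M | M. perfect_matching V E M}"
    unfolding max_forcing_number_def using assms finite_forcing_numbers by (intro Max_in) auto
  then show ?thesis
    using that by blast
qed

section \<open>Matchings of maximum forcing number\<close>

definition pairwise_alternating :: "'a set set \<Rightarrow> 'a set set \<Rightarrow> bool" where
  "pairwise_alternating E M \<longleftrightarrow> (\<forall>a b c d. {a, b} \<in> M \<longrightarrow> {c, d} \<in> M \<longrightarrow> {a, b} \<noteq> {c, d} \<longrightarrow>
     ({a, c} \<in> E \<and> {b, d} \<in> E) \<or> ({a, d} \<in> E \<and> {b, c} \<in> E))"

lemma pairwise_alternatingD: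
  "pairwise_alternating E M \<Longrightarrow> {a, b} \<in> M \<Longrightarrow> {c, d} \<in> M \<Longrightarrow> {a, b} \<noteq> {c, d} \<Longrightarrow>
    ({a, c} \<in> E \<and> {b, d} \<in> E) \<or> ({a, d} \<in> E \<and> {b, c} \<in> E)"
  unfolding pairwise_alternating_def by blast

lemma pairwise_alternating_orient:
  assumes "pairwise_alternating E M" "{a, b} \<in> M" "{c, d} \<in> M" "{a, b} \<noteq> {c, d}"
  obtains c' d' where "{c', d'} = {c, d}" "{a, c'} \<in> E" "{b, d'} \<in> E"
  using pairwise_alternatingD[OF assms] insert_commute by metis

context graph_matching
begin

lemma mate_on_four:
  assumes "distinct [a, b, c, d]" "{a, b, c, d} \<subseteq> V"
    and closed: "\<And>x. x \<in> {a, b, c, d} \<Longrightarrow> mate x \<in> {a, b, c, d}"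
  shows "(mate a = b \<and> mate c = d) \<or> (mate a = c \<and> mate b = d) \<or> (mate a = d \<and> mate b = c)"
proof -
  have V: "a \<in> V" "b \<in> V" "c \<in> V" "d \<in> V"
    using assms(2) by auto
  have "mate x \<noteq> x" if "x \<in> {a, b, c, d}" for x
    using that assms(2) mate_neq by blast
  then have "mate a \<in> {b, c, d}" "mate b \<in> {a, c, d}" "mate c \<in> {a, b, d}"
    using closed by blast+
  moreover have "b \<noteq> c" "b \<noteq> d" "c \<noteq> d" "a \<noteq> b" "a \<noteq> c" "a \<noteq> d"
    using assms(1) by auto
  ultimately show ?thesis
    using mate_ne_if_mate[OF V(1) V(2)] mate_ne_if_mate[OF V(1) V(3)]
      mate_ne_if_mate[OF V(2) V(3)] mate_ne_if_mate[OF V(3) V(2)] mate_ne_if_mate[OF V(4) V(2)]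
      mate_swap[OF V(1)]
    by auto
qed

lemma forcing_set_remove_two:
  assumes ab: "{a, b} \<in> M" and cd: "{c, d} \<in> M" and "{a, b} \<noteq> {c, d}"
    and no_square: "\<not> (({a, c} \<in> E \<and> {b, d} \<in> E) \<or> ({a, d} \<in> E \<and> {b, c} \<in> E))"
  shows "forcing_set V E M (M - {{a, b}, {c, d}})"
  unfolding forcing_set_def
proof (intro conjI allI impI)
  fix M' assume M': "perfect_matching V E M' \<and> M - {{a, b}, {c, d}} \<subseteq> M'"
  interpret M': graph_matching V E M'
    using simple M' by unfold_locales auto
  have "distinct [a, b, c, d]"
    using matching_edgeD[OF ab] matching_edgeD[OF cd] matching_edges_disjoint[OF ab cd \<open>{a, b} \<noteq> {c, d}\<close>]
    by auto
  have four: "{a, b, c, d} \<subseteq> V"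
    using matching_edgeD[OF ab] matching_edgeD[OF cd] by auto
  have "\<Union>(M - {{a, b}, {c, d}}) = V - {a, b, c, d}"
    using Union_M ab cd matching_edge_unique by blast
  then have "M'.mate x \<in> {a, b, c, d}" if "x \<in> {a, b, c, d}" for x
    using M' that four by (intro M'.mate_in_uncovered[of "M - {{a, b}, {c, d}}"]) auto
  then have "M'.mate a = b \<and> M'.mate c = d"
    using M'.mate_on_four[OF \<open>distinct [a, b, c, d]\<close> four] four no_square
      M'.mate_edge[of a] M'.mate_edge[of b] M'.M_subset_E by auto
  then have "{a, b} \<in> M'" "{c, d} \<in> M'"
    using M'.mate_edge four by auto
  then show "M' = M"
    using M' by (intro perfect_matching_superset_eq) auto
qed auto

lemma pairwise_alternating_if_forcing_number:
  assumes "forcing_number V E M = card M - 1"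
  shows "pairwise_alternating E M"
  unfolding pairwise_alternating_def
proof (intro allI impI)
  fix a b c d assume ab: "{a, b} \<in> M" and cd: "{c, d} \<in> M" and "{a, b} \<noteq> {c, d}"
  show "({a, c} \<in> E \<and> {b, d} \<in> E) \<or> ({a, d} \<in> E \<and> {b, c} \<in> E)"
  proof (rule ccontr)
    assume "\<not> ?thesis"
    then have "forcing_number V E M \<le> card (M - {{a, b}, {c, d}})"
      using forcing_number_le forcing_set_remove_two[OF ab cd \<open>{a, b} \<noteq> {c, d}\<close>] by blast
    also have "\<dots> = card M - 2"
      using ab cd \<open>{a, b} \<noteq> {c, d}\<close> finite_M by (simp add: card_Diff_subset)
    finally show False
      using assms card_mono[OF finite_M, of "{{a, b}, {c, d}}"] ab cd \<open>{a, b} \<noteq> {c, d}\<close> by auto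
  qed
qed

lemma uncovered_edges_unique:
  assumes M0: "perfect_matching V E M0" "pairwise_alternating E M0"
    and S: "forcing_set V E M S"
    and e: "e1 \<in> M0" "e2 \<in> M0" "e1 \<inter> \<Union>S = {}" "e2 \<inter> \<Union>S = {}"
  shows "e1 = e2"
proof (rule ccontr)
  assume "e1 \<noteq> e2"
  interpret M0: graph_matching V E M0
    using simple M0(1) by unfold_locales
  obtain A B C' D' where AB: "e1 = {A, B}" and CD': "e2 = {C', D'}"
    using e(1,2) M0.M_subset_E edgeE by (metis subsetD)
  then obtain C D where CD: "e2 = {C, D}" "{A, C} \<in> E" "{B, D} \<in> E"
    using pairwise_alternating_orient[OF M0(2)] e(1,2) \<open>e1 \<noteq> e2\<close> by metis
  have "dominated_square V E M S A B C D"
  proof unfold_locales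
    show "S \<subseteq> M"
      using S unfolding forcing_set_def by blast
    show "A \<in> V - \<Union>S" "B \<in> V - \<Union>S" "C \<in> V - \<Union>S" "D \<in> V - \<Union>S"
      using e AB CD M0.matching_edgeD by blast+
    show "distinct [A, B, C, D]"
      using M0.matching_edgeD M0.matching_edges_disjoint e(1,2) AB CD \<open>e1 \<noteq> e2\<close> by auto
    show "{A, B} \<in> E" "{C, D} \<in> E" "{A, C} \<in> E" "{B, D} \<in> E"
      using e(1,2) AB CD M0.M_subset_E by auto
    fix w assume "w \<in> V - \<Union>S" "w \<notin> {A, B, C, D}"
    then show "({w, A} \<in> E \<or> {w, B} \<in> E) \<and> ({w, C} \<in> E \<or> {w, D} \<in> E)"
      using pairwise_alternatingD[OF M0(2), of w "M0.mate w"] M0.mate_edge e(1,2) AB CD by auto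
  qed
  then show False
    using dominated_square.dominated_square_unforced forcing_set_not_unforced[OF S] by metis
qed

lemma card_edges_meeting_le:
  assumes "finite X"
  shows "card {e \<in> M. e \<inter> X \<noteq> {}} \<le> card X"
proof -
  have "\<exists>f. \<forall>e \<in> {e \<in> M. e \<inter> X \<noteq> {}}. f e \<in> e \<inter> X"
    by (rule bchoice) auto
  then obtain f where f: "\<And>e. e \<in> M \<Longrightarrow> e \<inter> X \<noteq> {} \<Longrightarrow> f e \<in> e \<inter> X"
    by auto
  have "inj_on f {e \<in> M. e \<inter> X \<noteq> {}}"
  proof (rule inj_onI)
    fix e e' assume "e \<in> {e \<in> M. e \<inter> X \<noteq> {}}" "e' \<in> {e \<in> M. e \<inter> X \<noteq> {}}" "f e = f e'"
    then show "e = e'"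
      using f[of e] f[of e'] matching_edge_unique[of e e' "f e"] by auto
  qed
  then show ?thesis
    using f by (intro card_inj_on_le[OF _ _ assms]) auto
qed

lemma card_uncovered_edges_le_one:
  assumes "perfect_matching V E M0" "pairwise_alternating E M0" "forcing_set V E M S"
  shows "card {e \<in> M0. e \<inter> \<Union>S = {}} \<le> 1"
proof -
  interpret M0: graph_matching V E M0
    using simple assms(1) by unfold_locales
  show ?thesis
    using uncovered_edges_unique[OF assms] M0.finite_M by (auto simp: card_le_Suc0_iff_eq)
qed

lemma card_split_by_meeting: "card M \<le> card {e \<in> M. e \<inter> X \<noteq> {}} + card {e \<in> M. e \<inter> X = {}}"
proof -
  have "card M = card ({e \<in> M. e \<inter> X \<noteq> {}} \<union> {e \<in> M. e \<inter> X = {}})"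
    by (rule arg_cong[where f = card]) blast
  then show ?thesis
    using card_Un_le[of "{e \<in> M. e \<inter> X \<noteq> {}}" "{e \<in> M. e \<inter> X = {}}"] by linarith
qed

lemma card_le_twice_forcing_set:
  assumes M0: "perfect_matching V E M0" "pairwise_alternating E M0" and S: "forcing_set V E M S"
  shows "card M0 \<le> 2 * card S + 1"
proof -
  interpret M0: graph_matching V E M0
    using simple M0(1) by unfold_locales
  have "S \<subseteq> M"
    using S unfolding forcing_set_def by blast
  then have "\<Union>S \<subseteq> V"
    using Union_M by blast
  then have "finite (\<Union>S)"
    using finite_V finite_subset by blast
  have "card (\<Union>S) = 2 * card S"
    using card_Union_matching[OF \<open>S \<subseteq> M\<close>] .
  then show ?thesis
    using M0.card_split_by_meeting[of "\<Union>S"] M0.card_edges_meeting_le[OF \<open>finite (\<Union>S)\<close>]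
      card_uncovered_edges_le_one[OF M0 S] by linarith
qed

lemma card_forcing_set_ge_card_minus_one:
  assumes "pairwise_alternating E M" and S: "forcing_set V E M S"
  shows "card M - 1 \<le> card S"
proof -
  have "S \<subseteq> M"
    using S unfolding forcing_set_def by blast
  have "{e \<in> M. e \<inter> \<Union>S \<noteq> {}} = S"
  proof (intro equalityI subsetI)
    fix e assume "e \<in> {e \<in> M. e \<inter> \<Union>S \<noteq> {}}"
    then obtain v s where "e \<in> M" "v \<in> e" "s \<in> S" "v \<in> s"
      by blast
    then show "e \<in> S"
      using matching_edge_unique[of e s v] \<open>S \<subseteq> M\<close> by auto
  next
    fix s assume "s \<in> S"
    then have "s \<in> M" "s \<noteq> {}"
      using \<open>S \<subseteq> M\<close> card_matching_edge by force+
    then show "s \<in> {e \<in> M. e \<inter> \<Union>S \<noteq> {}}"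
      using \<open>s \<in> S\<close> by blast
  qed
  then show ?thesis
    using card_split_by_meeting[of "\<Union>S"] card_uncovered_edges_le_one[OF perfect assms] by simp
qed

end

lemma min_forcing_number_bounds:
  assumes G: "in_G2n n V E" and max: "max_forcing_number V E = n - 1"
  shows "n div 2 \<le> min_forcing_number V E \<and> min_forcing_number V E \<le> n - 1"
proof -
  obtain M1 where simple: "simple_graph V E" and "card V = 2 * n" and M1: "perfect_matching V E M1"
    using G unfolding in_G2n_def by blast
  obtain M0 where M0: "perfect_matching V E M0" "max_forcing_number V E = forcing_number V E M0"
    using max_forcing_number_attained[OF simple M1] by blast
  interpret M0: graph_matching V E M0
    using simple M0(1) by unfold_locales
  have "card M0 = n"
    using M0.card_V \<open>card V = 2 * n\<close> by simp
  then have alternating: "pairwise_alternating E M0"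
    using M0.pairwise_alternating_if_forcing_number M0(2) max by simp
  obtain M where M: "perfect_matching V E M" "min_forcing_number V E = forcing_number V E M"
    using min_forcing_number_attained[OF simple M1] by blast
  interpret M: graph_matching V E M
    using simple M(1) by unfold_locales
  obtain S where "forcing_set V E M S" "forcing_number V E M = card S"
    using M.forcing_number_attained by blast
  then have "n div 2 \<le> min_forcing_number V E"
    using M.card_le_twice_forcing_set[OF M0(1) alternating] \<open>card M0 = n\<close> M(2) by fastforce
  moreover have "min_forcing_number V E \<le> n - 1"
    using min_forcing_number_le[OF simple M0(1)] M0(2) max by simp
  ultimately show ?thesis ..
qed

section \<open>The block graphs\<close>

lemma perfect_matching_of_involution:
  assumes "\<And>x. x \<in> V \<Longrightarrow> f x \<in> V \<and> f x \<noteq> x \<and> f (f x) = x \<and> {x, f x} \<in> E"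
  shows "perfect_matching V E ((\<lambda>x. {x, f x}) ` V)"
  unfolding perfect_matching_def
proof (intro conjI ballI)
  show "(\<lambda>x. {x, f x}) ` V \<subseteq> E"
    using assms by blast
  fix v assume "v \<in> V"
  have "e = {v, f v}" if e: "e \<in> (\<lambda>x. {x, f x}) ` V" "v \<in> e" for e
  proof -
    obtain x where x: "x \<in> V" "e = {x, f x}"
      using e(1) by blast
    then have "v = x \<or> v = f x"
      using e(2) by blast
    then show ?thesis
      using x assms[OF x(1)] by (auto simp: insert_commute)
  qed
  then show "\<exists>!e. e \<in> (\<lambda>x. {x, f x}) ` V \<and> v \<in> e"
    using \<open>v \<in> V\<close> by blast
qed

definition pair_flip :: "nat \<Rightarrow> nat" where
  "pair_flip i = (if even i then i + 1 else i - 1)"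

lemma pair_flip_props:
  "pair_flip i \<noteq> i" "pair_flip (pair_flip i) = i" "even (pair_flip i) \<noteq> even i"
  "pair_flip i div 2 = i div 2"
  unfolding pair_flip_def by (cases "even i"; auto elim!: evenE oddE)+

lemma pair_flip_less_iff: "pair_flip i < 2 * m \<longleftrightarrow> i < 2 * m"
  unfolding pair_flip_def by (cases "even i") (auto elim!: evenE oddE)

lemma pair_flip_eqI: "i div 2 = j div 2 \<Longrightarrow> i \<noteq> j \<Longrightarrow> j = pair_flip i"
  unfolding pair_flip_def by (cases "even i"; cases "even j") (auto elim!: evenE oddE)

definition same_low_block :: "nat \<Rightarrow> nat \<Rightarrow> nat \<Rightarrow> bool" where
  "same_low_block k x y \<longleftrightarrow> x < 4 * k \<and> y < 4 * k \<and> x div 4 = y div 4"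

lemma same_low_block_pairs:
  "a < 2 \<Longrightarrow> b < 2 \<Longrightarrow> same_low_block k (2 * i + a) (2 * j + b) \<longleftrightarrow> i < 2 * k \<and> j < 2 * k \<and> i div 2 = j div 2"
  unfolding same_low_block_def by (auto simp: div_mult2_eq[of _ 2 2, simplified])

text \<open>Below \<open>4 * k\<close> the vertices form blocks \<open>{4q, ..., 4q + 3}\<close>; two vertices of equal
  parity are adjacent iff they lie in a common block, two of opposite parity iff they form a
  pair \<open>{2i, 2i + 1}\<close> or do not lie in a common block.\<close>

definition block_adj :: "nat \<Rightarrow> nat \<Rightarrow> nat \<Rightarrow> bool" where
  "block_adj k x y \<longleftrightarrow>
     (if even x = even y then same_low_block k x y else x div 2 = y div 2 \<or> \<not> same_low_block k x y)"

definition block_graph :: "nat \<Rightarrow> nat \<Rightarrow> nat set set" where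
  "block_graph n k = {{x, y} | x y. x < 2 * n \<and> y < 2 * n \<and> x \<noteq> y \<and> block_adj k x y}"

definition block_mate :: "nat \<Rightarrow> nat \<Rightarrow> nat" where
  "block_mate k x = (if x < 4 * k then 2 * pair_flip (x div 2) + x mod 2 else pair_flip x)"

definition block_matching :: "nat \<Rightarrow> nat \<Rightarrow> nat set set" where
  "block_matching n k = (\<lambda>x. {x, block_mate k x}) ` {..<2 * n}"

lemma block_adj_sym: "block_adj k x y \<longleftrightarrow> block_adj k y x"
  unfolding block_adj_def same_low_block_def by auto

lemma mem_block_graph: "{a, b} \<in> block_graph n k \<longleftrightarrow> a < 2 * n \<and> b < 2 * n \<and> a \<noteq> b \<and> block_adj k a b"
  unfolding block_graph_def by (auto simp: doubleton_eq_iff block_adj_sym)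

lemma simple_block_graph: "simple_graph {..<2 * n} (block_graph n k)"
  unfolding simple_graph_def block_graph_def by auto

lemma block_mate_low:
  assumes "x < 4 * k"
  shows "block_mate k x < 4 * k \<and> block_mate k x \<noteq> x \<and> block_mate k (block_mate k x) = x \<and>
    even (block_mate k x) = even x \<and> same_low_block k x (block_mate k x)"
proof -
  define i b where "i = x div 2" and "b = x mod 2"
  have x: "x = 2 * i + b" "b < 2" "i < 2 * k"
    using assms unfolding i_def b_def by auto
  have "pair_flip i < 2 * k"
    using x(3) pair_flip_less_iff by blast
  then have "2 * pair_flip i + b < 4 * k"
    using x(2) by linarith
  moreover have "block_mate k x = 2 * pair_flip i + b"
    using assms unfolding block_mate_def i_def b_def by simp
  ultimately show ?thesis
    using x \<open>pair_flip i < 2 * k\<close> pair_flip_props[of i] same_low_block_pairs[of b b k i "pair_flip i"]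
    unfolding block_mate_def by auto
qed

lemma block_mate_high:
  assumes "4 * k \<le> x"
  shows "4 * k \<le> block_mate k x \<and> block_mate k x \<noteq> x \<and> block_mate k (block_mate k x) = x \<and>
    even (block_mate k x) \<noteq> even x \<and> block_mate k x div 2 = x div 2"
proof -
  have "4 * k \<le> pair_flip x"
    using assms pair_flip_less_iff[of x "2 * k"] by simp
  then show ?thesis
    using assms pair_flip_props[of x] unfolding block_mate_def by simp
qed

lemma block_mate_zero: "block_mate 0 x = pair_flip x"
  unfolding block_mate_def by simp

lemma block_mate_props:
  assumes "2 * k \<le> n" "x < 2 * n"
  shows "block_mate k x < 2 * n \<and> block_mate k x \<noteq> x \<and> block_mate k (block_mate k x) = x \<and>
    block_adj k x (block_mate k x)"
proof (cases "x < 4 * k")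
  case True
  then show ?thesis
    using block_mate_low[OF True] assms(1) unfolding block_adj_def by auto
next
  case False
  then have "block_mate k x = pair_flip x"
    unfolding block_mate_def by simp
  then have "block_mate k x < 2 * n"
    using assms(2) pair_flip_less_iff by simp
  then show ?thesis
    using block_mate_high[of k x] False unfolding block_adj_def by auto
qed

lemma perfect_block_matching:
  assumes "2 * k \<le> n"
  shows "perfect_matching {..<2 * n} (block_graph n k) (block_matching n k)"
  unfolding block_matching_def
proof (rule perfect_matching_of_involution)
  fix x assume "x \<in> {..<2 * n}"
  then show "block_mate k x \<in> {..<2 * n} \<and> block_mate k x \<noteq> x \<and> block_mate k (block_mate k x) = x \<and>
      {x, block_mate k x} \<in> block_graph n k"
    using block_mate_props[OF assms, of x] mem_block_graph by auto
qed

lemma block_matching_zero: "block_matching n 0 = {{2 * i, 2 * i + 1} | i. i < n}"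
proof -
  have "{x, pair_flip x} = {2 * (x div 2), 2 * (x div 2) + 1}" for x
    unfolding pair_flip_def by (cases "even x") (auto elim!: evenE oddE)
  then show ?thesis
    unfolding block_matching_def block_mate_zero by (auto intro!: image_eqI[of _ _ "2 * _"])
qed

lemma perfect_base_matching: "perfect_matching {..<2 * n} (block_graph n k) (block_matching n 0)"
  unfolding block_matching_def block_mate_zero
proof (rule perfect_matching_of_involution)
  fix x assume "x \<in> {..<2 * n}"
  then show "pair_flip x \<in> {..<2 * n} \<and> pair_flip x \<noteq> x \<and> pair_flip (pair_flip x) = x \<and>
      {x, pair_flip x} \<in> block_graph n k"
    using pair_flip_props[of x] pair_flip_less_iff[of x n] unfolding mem_block_graph block_adj_def by auto
qed

lemma block_square:
  assumes "i \<noteq> j"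
  shows "(block_adj k (2 * i) (2 * j) \<and> block_adj k (2 * i + 1) (2 * j + 1)) \<or>
    (block_adj k (2 * i) (2 * j + 1) \<and> block_adj k (2 * i + 1) (2 * j))"
  using assms same_low_block_pairs[of 0 0 k i j] same_low_block_pairs[of 1 1 k i j]
    same_low_block_pairs[of 0 1 k i j] same_low_block_pairs[of 1 0 k i j]
  unfolding block_adj_def by auto

lemma pairwise_alternating_base: "pairwise_alternating (block_graph n k) (block_matching n 0)"
  unfolding pairwise_alternating_def block_matching_zero
proof (intro allI impI)
  fix a b c d
  assume "{a, b} \<in> {{2 * i, 2 * i + 1} | i. i < n}" "{c, d} \<in> {{2 * i, 2 * i + 1} | i. i < n}"
    and "{a, b} \<noteq> {c, d}"
  then obtain i j where ij: "i < n" "j < n" "{a, b} = {2 * i, 2 * i + 1}" "{c, d} = {2 * j, 2 * j + 1}"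
    by auto
  then have "i \<noteq> j"
    using \<open>{a, b} \<noteq> {c, d}\<close> by auto
  then show "({a, c} \<in> block_graph n k \<and> {b, d} \<in> block_graph n k) \<or>
      ({a, d} \<in> block_graph n k \<and> {b, c} \<in> block_graph n k)"
    using block_square[OF \<open>i \<noteq> j\<close>, of k] block_adj_sym ij
    by (auto simp: mem_block_graph doubleton_eq_iff)
qed

lemma max_forcing_number_block_graph:
  assumes "1 \<le> n" "2 * k \<le> n"
  shows "max_forcing_number {..<2 * n} (block_graph n k) = n - 1"
proof -
  note simple = simple_block_graph[of n k]
  note base = perfect_base_matching[of n k]
  interpret base: graph_matching "{..<2 * n}" "block_graph n k" "block_matching n 0"
    using simple base by unfold_locales
  obtain M where M: "perfect_matching {..<2 * n} (block_graph n k) M"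
    "max_forcing_number {..<2 * n} (block_graph n k) = forcing_number {..<2 * n} (block_graph n k) M"
    using max_forcing_number_attained[OF simple base] by blast
  interpret M: graph_matching "{..<2 * n}" "block_graph n k" M
    using simple M(1) by unfold_locales
  have "card M = n" "card (block_matching n 0) = n"
    using M.card_V base.card_V by simp_all
  then have "forcing_number {..<2 * n} (block_graph n k) M \<le> n - 1"
    using M.forcing_number_le_card_minus_one assms(1) by fastforce
  moreover obtain S where "forcing_set {..<2 * n} (block_graph n k) (block_matching n 0) S"
    "forcing_number {..<2 * n} (block_graph n k) (block_matching n 0) = card S"
    using base.forcing_number_attained by blast
  then have "n - 1 \<le> forcing_number {..<2 * n} (block_graph n k) (block_matching n 0)"
    using base.card_forcing_set_ge_card_minus_one[OF pairwise_alternating_base]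
      \<open>card (block_matching n 0) = n\<close> by simp
  ultimately show ?thesis
    using forcing_number_le_max[OF simple base] M(2) by linarith
qed

lemma block_adj_high: "4 * k \<le> x \<Longrightarrow> block_adj k x y \<longleftrightarrow> even x \<noteq> even y"
  unfolding block_adj_def same_low_block_def by auto

lemma card_le_2_if_parity_determines:
  assumes "finite X" "\<And>x y. x \<in> X \<Longrightarrow> y \<in> X \<Longrightarrow> even x = even y \<Longrightarrow> x = y"
  shows "card X \<le> 2"
proof -
  have "card {x \<in> X. even x} \<le> 1" "card {x \<in> X. odd x} \<le> 1"
    using assms by (auto simp: card_le_Suc0_iff_eq)
  moreover have "card X = card ({x \<in> X. even x} \<union> {x \<in> X. odd x})"
    by (rule arg_cong[where f = card]) blast
  moreover have "card ({x \<in> X. even x} \<union> {x \<in> X. odd x}) \<le> card {x \<in> X. even x} + card {x \<in> X. odd x}"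
    by (rule card_Un_le)
  ultimately show ?thesis
    by linarith
qed

lemma card_le_if_one_full_pair:
  assumes "finite U"
    and one_pair: "\<And>i j. 2 * i \<in> U \<Longrightarrow> 2 * i + 1 \<in> U \<Longrightarrow> 2 * j \<in> U \<Longrightarrow> 2 * j + 1 \<in> U \<Longrightarrow> i = j"
  shows "card (U \<inter> {..<2 * m}) \<le> m + 1"
proof -
  define A where "A = U \<inter> {..<2 * m}"
  define T where "T = {x \<in> A. odd x \<and> x - 1 \<in> U}"
  have "finite A" "finite T"
    using assms(1) unfolding A_def T_def by auto
  have "card T \<le> 1"
  proof -
    have "x = y" if "x \<in> T" "y \<in> T" for x y
      using that one_pair[of "x div 2" "y div 2"] unfolding T_def A_def
      by (auto elim!: oddE)
    then show ?thesis
      using \<open>finite T\<close> by (auto simp: card_le_Suc0_iff_eq)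
  qed
  have "inj_on (\<lambda>x. x div 2) (A - T)"
  proof (rule inj_onI)
    fix x y assume "x \<in> A - T" "y \<in> A - T" "x div 2 = y div 2"
    then show "x = y"
      unfolding T_def A_def by (cases "even x"; cases "even y") (auto elim!: evenE oddE)
  qed
  moreover have "(\<lambda>x. x div 2) ` (A - T) \<subseteq> {..<m}"
    unfolding A_def by auto
  ultimately have "card (A - T) \<le> m"
    using card_inj_on_le[of "\<lambda>x. x div 2" "A - T" "{..<m}"] by simp
  have "card A \<le> card ((A - T) \<union> T)"
    using \<open>finite A\<close> \<open>finite T\<close> by (intro card_mono) auto
  also have "\<dots> \<le> card (A - T) + card T"
    by (rule card_Un_le)
  finally show ?thesis
    using \<open>card (A - T) \<le> m\<close> \<open>card T \<le> 1\<close> unfolding A_def by linarith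
qed

lemma uncovered_high_same_parity:
  assumes M: "perfect_matching {..<2 * n} (block_graph n k) M"
    and S: "forcing_set {..<2 * n} (block_graph n k) M S"
    and xy: "x \<in> {..<2 * n} - \<Union>S" "y \<in> {..<2 * n} - \<Union>S" "4 * k \<le> x" "4 * k \<le> y" "even x = even y"
  shows "x = y"
proof (rule ccontr)
  assume "x \<noteq> y"
  interpret graph_matching "{..<2 * n}" "block_graph n k" M
    using simple_block_graph M by unfold_locales
  have "{v, mate v} \<in> block_graph n k" if "v \<in> {..<2 * n}" for v
    using that mate_edge M_subset_E by blast
  then have mate: "mate x < 2 * n" "even (mate x) \<noteq> even x" "mate y < 2 * n" "even (mate y) \<noteq> even y"
    using xy block_adj_high[of k x] block_adj_high[of k y] unfolding mem_block_graph by auto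
  have "unforced S"
  proof (rule unforced_alternating_square[of S x y])
    show "S \<subseteq> M"
      using S unfolding forcing_set_def by blast
    have "block_adj k y (mate x)" "block_adj k x (mate y)" "mate x \<noteq> y" "mate y \<noteq> x"
      using mate xy block_adj_high[of k x] block_adj_high[of k y] by auto
    then show "{mate x, y} \<in> block_graph n k" "{mate y, x} \<in> block_graph n k"
      using mate xy block_adj_sym unfolding mem_block_graph by auto
  qed (use xy mate \<open>x \<noteq> y\<close> in auto)
  then show False
    using forcing_set_not_unforced[OF S] by blast
qed

lemma uncovered_pairs_unique:
  assumes M: "perfect_matching {..<2 * n} (block_graph n k) M"
    and S: "forcing_set {..<2 * n} (block_graph n k) M S"
    and uncovered: "{2 * i, 2 * i + 1, 2 * j, 2 * j + 1} \<subseteq> {..<2 * n} - \<Union>S"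
  shows "i = j"
proof -
  interpret graph_matching "{..<2 * n}" "block_graph n k" M
    using simple_block_graph M by unfold_locales
  have "i < n" "j < n"
    using uncovered by auto
  then have "{2 * i, 2 * i + 1} \<in> block_matching n 0" "{2 * j, 2 * j + 1} \<in> block_matching n 0"
    unfolding block_matching_zero by auto
  moreover have "{2 * i, 2 * i + 1} \<inter> \<Union>S = {}" "{2 * j, 2 * j + 1} \<inter> \<Union>S = {}"
    using uncovered by auto
  ultimately have "{2 * i, 2 * i + 1} = {2 * j, 2 * j + 1}"
    by (rule uncovered_edges_unique[OF perfect_base_matching pairwise_alternating_base S])
  then show ?thesis
    by (auto simp: doubleton_eq_iff)
qed

lemma card_forcing_set_block_graph_ge:
  assumes M: "perfect_matching {..<2 * n} (block_graph n k) M"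
    and S: "forcing_set {..<2 * n} (block_graph n k) M S"
  shows "n - 1 - k \<le> card S"
proof -
  interpret graph_matching "{..<2 * n}" "block_graph n k" M
    using simple_block_graph M by unfold_locales
  define U where "U = {..<2 * n} - \<Union>S"
  have "S \<subseteq> M"
    using S unfolding forcing_set_def by blast
  then have "\<Union>S \<subseteq> {..<2 * n}" "card (\<Union>S) = 2 * card S"
    using Union_M card_Union_matching by auto
  then have card_U: "card U = 2 * n - 2 * card S" "2 * card S \<le> 2 * n"
    unfolding U_def using card_mono[of "{..<2 * n}" "\<Union>S"] by (auto simp: card_Diff_subset finite_subset)
  have "i = j" if "2 * i \<in> U" "2 * i + 1 \<in> U" "2 * j \<in> U" "2 * j + 1 \<in> U" for i j
    using uncovered_pairs_unique[OF M S] that unfolding U_def by auto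
  then have "card (U \<inter> {..<4 * k}) \<le> 2 * k + 1"
    using card_le_if_one_full_pair[of U "2 * k"] unfolding U_def by simp
  moreover have "card (U - {..<4 * k}) \<le> 2"
    using uncovered_high_same_parity[OF M S] unfolding U_def
    by (intro card_le_2_if_parity_determines) auto
  moreover have "card U = card ((U \<inter> {..<4 * k}) \<union> (U - {..<4 * k}))"
    by (rule arg_cong[where f = card]) blast
  moreover have "card ((U \<inter> {..<4 * k}) \<union> (U - {..<4 * k})) \<le> card (U \<inter> {..<4 * k}) + card (U - {..<4 * k})"
    by (rule card_Un_le)
  ultimately show ?thesis
    using card_U by linarith
qed

definition covered_vertices :: "nat \<Rightarrow> nat \<Rightarrow> nat set" where
  "covered_vertices n k = {x. x < 2 * n - 2 \<and> (odd x \<or> 4 * k \<le> x)}"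

definition block_forcing_set :: "nat \<Rightarrow> nat \<Rightarrow> nat set set" where
  "block_forcing_set n k = (\<lambda>x. {x, block_mate k x}) ` covered_vertices n k"

lemma block_mate_covered_vertices:
  assumes "x \<in> covered_vertices n k" "2 * k \<le> n - 1"
  shows "block_mate k x \<in> covered_vertices n k"
proof (cases "x < 4 * k")
  case True
  then show ?thesis
    using assms block_mate_low[OF True] unfolding covered_vertices_def by auto
next
  case False
  then have "block_mate k x = pair_flip x"
    unfolding block_mate_def by simp
  then show ?thesis
    using assms False block_mate_high[of k x] pair_flip_less_iff[of x "n - 1"]
    unfolding covered_vertices_def by (auto simp: right_diff_distrib')
qed

lemma Union_block_forcing_set: "2 * k \<le> n - 1 \<Longrightarrow> \<Union>(block_forcing_set n k) = covered_vertices n k"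
  unfolding block_forcing_set_def using block_mate_covered_vertices by blast

lemma block_forcing_set_subset: "block_forcing_set n k \<subseteq> block_matching n k"
  unfolding block_forcing_set_def block_matching_def covered_vertices_def by auto

lemma card_block_forcing_set:
  assumes "1 \<le> n" "2 * k \<le> n - 1"
  shows "card (block_forcing_set n k) \<le> n - 1 - k"
proof -
  interpret graph_matching "{..<2 * n}" "block_graph n k" "block_matching n k"
    using simple_block_graph perfect_block_matching assms by unfold_locales auto
  have "2 * card (block_forcing_set n k) = card (covered_vertices n k)"
    using card_Union_matching[OF block_forcing_set_subset] Union_block_forcing_set[OF assms(2)] by simp
  also have "\<dots> \<le> card ((\<lambda>i. 2 * i + 1) ` {..<2 * k} \<union> {4 * k..<2 * n - 2})"
    by (rule card_mono) (auto simp: covered_vertices_def elim!: oddE)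
  also have "\<dots> \<le> card ((\<lambda>i. 2 * i + 1) ` {..<2 * k}) + card {4 * k..<2 * n - 2}"
    by (rule card_Un_le)
  also have "\<dots> \<le> 2 * k + (2 * n - 2 - 4 * k)"
    using card_image_le[of "{..<2 * k}" "\<lambda>i. 2 * i + 1"] by simp
  finally show ?thesis
    using assms by linarith
qed

lemma block_mate_even_low_unique:
  assumes "even x" "even y" "same_low_block k x y" "x \<noteq> y"
  shows "y = block_mate k x"
proof -
  obtain i j where ij: "x = 2 * i + 0" "y = 2 * j + 0"
    using assms(1,2) by (auto elim!: evenE)
  then have "i < 2 * k" "i div 2 = j div 2" "i \<noteq> j"
    using assms(3,4) same_low_block_pairs[of 0 0 k i j] by auto
  then show ?thesis
    using ij pair_flip_eqI unfolding block_mate_def by auto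
qed

locale block_forcing_superset = graph_matching "{..<2 * Suc N}" "block_graph (Suc N) k" M' for N k M' +
  assumes small_k: "2 * k \<le> N" and forcing_subset: "block_forcing_set (Suc N) k \<subseteq> M'"
begin

lemma not_covered_iff:
  "x \<in> {..<2 * Suc N} - covered_vertices (Suc N) k \<longleftrightarrow> x = 2 * N \<or> x = 2 * N + 1 \<or> (even x \<and> x < 4 * k)"
  using small_k unfolding covered_vertices_def by auto

lemma mate_not_covered_vertex:
  assumes "x \<in> {..<2 * Suc N} - covered_vertices (Suc N) k"
  shows "mate x \<in> {..<2 * Suc N} - covered_vertices (Suc N) k \<and> block_adj k x (mate x)"
proof -
  have "x < 2 * Suc N" "x \<notin> \<Union>(block_forcing_set (Suc N) k)"
    using assms Union_block_forcing_set small_k by auto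
  moreover have "{x, mate x} \<in> block_graph (Suc N) k"
    using \<open>x < 2 * Suc N\<close> mate_edge M_subset_E by auto
  moreover have "mate x \<in> {..<2 * Suc N} - covered_vertices (Suc N) k"
    using forcing_subset Union_block_forcing_set[of k "Suc N"] small_k calculation(1,2)
    by (intro mate_in_uncovered[of "block_forcing_set (Suc N) k"]) auto
  ultimately show ?thesis
    unfolding mem_block_graph by auto
qed

lemma mate_top: "mate (2 * N) = 2 * N + 1" "mate (2 * N + 1) = 2 * N"
proof -
  have "4 * k \<le> 2 * N"
    using small_k by simp
  then have "mate (2 * N) \<in> {..<2 * Suc N} - covered_vertices (Suc N) k" "odd (mate (2 * N))"
    using mate_not_covered_vertex[of "2 * N"] not_covered_iff block_adj_high by auto
  then show "mate (2 * N) = 2 * N + 1"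
    using not_covered_iff[of "mate (2 * N)"] by auto
  then show "mate (2 * N + 1) = 2 * N"
    using mate_swap by simp
qed

lemma mate_low:
  assumes "even x" "x < 4 * k"
  shows "mate x = block_mate k x"
proof -
  have x: "x \<in> {..<2 * Suc N} - covered_vertices (Suc N) k" "x \<noteq> 2 * N" "x \<noteq> 2 * N + 1"
    using assms small_k not_covered_iff by auto
  then have "mate x \<noteq> 2 * N" "mate x \<noteq> 2 * N + 1"
    using mate_swap[of x] mate_top by auto
  then have "even (mate x)" "same_low_block k x (mate x)" "x \<noteq> mate x"
    using mate_not_covered_vertex[OF x(1)] not_covered_iff[of "mate x"] assms mate_neq x(1)
    unfolding block_adj_def same_low_block_def by auto
  then show ?thesis
    using block_mate_even_low_unique[of x "mate x" k] assms(1) by blast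
qed

lemma block_matching_subset: "block_matching (Suc N) k \<subseteq> M'"
proof -
  have "{x, block_mate k x} \<in> M'" if "x < 2 * Suc N" for x
  proof (cases "x \<in> covered_vertices (Suc N) k")
    case True
    then show ?thesis
      using forcing_subset unfolding block_forcing_set_def by blast
  next
    case False
    have "4 * k \<le> 2 * N"
      using small_k by simp
    then have top: "block_mate k (2 * N) = 2 * N + 1" "block_mate k (2 * N + 1) = 2 * N"
      unfolding block_mate_def pair_flip_def by auto
    have "x \<in> {..<2 * Suc N} - covered_vertices (Suc N) k"
      using False that by simp
    then consider "x = 2 * N" | "x = 2 * N + 1" | "even x" "x < 4 * k"
      unfolding not_covered_iff by blast
    then have "mate x = block_mate k x"
      by cases (use top mate_top mate_low in auto)
    then show ?thesis
      using mate_edge that by fastforce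
  qed
  then show ?thesis
    unfolding block_matching_def by auto
qed

end

lemma block_forcing_set_forcing:
  assumes "1 \<le> n" "2 * k \<le> n - 1"
  shows "forcing_set {..<2 * n} (block_graph n k) (block_matching n k) (block_forcing_set n k)"
  unfolding forcing_set_def
proof (intro conjI allI impI)
  show "block_forcing_set n k \<subseteq> block_matching n k"
    by (rule block_forcing_set_subset)
  interpret B: graph_matching "{..<2 * n}" "block_graph n k" "block_matching n k"
    using simple_block_graph perfect_block_matching assms by unfold_locales auto
  obtain N where N: "n = Suc N"
    using assms(1) by (cases n) auto
  fix M' assume M': "perfect_matching {..<2 * n} (block_graph n k) M' \<and> block_forcing_set n k \<subseteq> M'"
  then interpret block_forcing_superset N k M'
    using simple_block_graph[of "Suc N" k] assms(2) N by unfold_locales auto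
  show "M' = block_matching n k"
    using M' B.perfect_matching_superset_eq block_matching_subset N by blast
qed

lemma min_forcing_number_block_graph:
  assumes "1 \<le> n" "2 * k \<le> n - 1"
  shows "min_forcing_number {..<2 * n} (block_graph n k) = n - 1 - k"
proof -
  note simple = simple_block_graph[of n k]
  have B: "perfect_matching {..<2 * n} (block_graph n k) (block_matching n k)"
    using perfect_block_matching assms(2) by simp
  interpret B: graph_matching "{..<2 * n}" "block_graph n k" "block_matching n k"
    using simple B by unfold_locales
  obtain M where M: "perfect_matching {..<2 * n} (block_graph n k) M"
    "min_forcing_number {..<2 * n} (block_graph n k) = forcing_number {..<2 * n} (block_graph n k) M"
    using min_forcing_number_attained[OF simple B] by blast
  interpret M: graph_matching "{..<2 * n}" "block_graph n k" M
    using simple M(1) by unfold_locales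
  obtain S where "forcing_set {..<2 * n} (block_graph n k) M S"
    "forcing_number {..<2 * n} (block_graph n k) M = card S"
    using M.forcing_number_attained by blast
  then have "n - 1 - k \<le> min_forcing_number {..<2 * n} (block_graph n k)"
    using card_forcing_set_block_graph_ge[OF M(1)] M(2) by simp
  moreover have "min_forcing_number {..<2 * n} (block_graph n k) \<le> n - 1 - k"
    using min_forcing_number_le[OF simple B] B.forcing_number_le[OF block_forcing_set_forcing[OF assms]]
      card_block_forcing_set[OF assms] by linarith
  ultimately show ?thesis
    by linarith
qed

lemma block_graph_in_G2n: "in_G2n n {..<2 * n} (block_graph n k)"
  unfolding in_G2n_def using simple_block_graph perfect_base_matching[of n k] by auto

theorem theorem5p7:
  fixes n :: nat
  assumes "n \<ge> 1"
  shows "(\<forall>(V :: 'a set) E. in_G2n n V E \<and> max_forcing_number V E = n - 1 \<longrightarrow>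
            n div 2 \<le> min_forcing_number V E \<and> min_forcing_number V E \<le> n - 1)
       \<and> (\<forall>m. n div 2 \<le> m \<and> m \<le> n - 1 \<longrightarrow>
            (\<exists>(V :: nat set) E. in_G2n n V E \<and> max_forcing_number V E = n - 1 \<and>
                                min_forcing_number V E = m))"
proof (rule conjI; intro allI impI)
  fix V :: "'a set" and E
  assume "in_G2n n V E \<and> max_forcing_number V E = n - 1"
  then show "n div 2 \<le> min_forcing_number V E \<and> min_forcing_number V E \<le> n - 1"
    using min_forcing_number_bounds by blast
next
  fix m assume m: "n div 2 \<le> m \<and> m \<le> n - 1"
  define k where "k = n - 1 - m"
  have k: "2 * k \<le> n - 1" "n - 1 - k = m"
    using m unfolding k_def by linarith+
  then have "2 * k \<le> n"
    by simp
  then show "\<exists>(V :: nat set) E. in_G2n n V E \<and> max_forcing_number V E = n - 1 \<and> min_forcing_number V E = m"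
    using block_graph_in_G2n[of n k] max_forcing_number_block_graph[OF assms] min_forcing_number_block_graph[OF assms k(1)]
      k(2) by auto
qed

end
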